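(* For every integer $k\geq 1$ there exist $n$ and a connected $k$-colouring of the edges of $K_n^{(3)}$ with no multicoloured $4$-set.
   Context: $K_n^{(3)}$ is the complete $3$-uniform hypergraph on $n$ vertices (edges are all $3$-subsets). A strong path in a $3$-uniform hypergraph $H$ is a sequence of edges $E_1,\dots,E_m$ of $H$ with $|E_t\cap E_{t+1}|=2$ for all $t$. $H$ is connected if for any two $2$-subsets $\{u,v\},\{u',v'\}$ of $V(H)$ there is a strong path $E_1,\dots,E_m$ in $H$ with $\{u,v\}\subseteq E_1$ and $\{u',v'\}\subseteq E_m$. A $k$-colouring of the edges of $K_n^{(3)}$ is connected if for each colour, the $3$-graph on all $n$ vertices formed by the edges of that colour is connected. A $4$-set of vertices is multicoloured if its four $3$-subsets receive four distinct colours. *)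

theory Defs
  imports Main
begin

text \<open>A 3-uniform hypergraph on vertex set V is given by its edge set H (a set of 3-subsets of V).\<close>

definition strong_path :: "'a set set \<Rightarrow> 'a set list \<Rightarrow> bool" where
  "strong_path H Es \<longleftrightarrow> Es \<noteq> [] \<and> set Es \<subseteq> H \<and>
     (\<forall>t. Suc t < length Es \<longrightarrow> card (Es ! t \<inter> Es ! Suc t) = 2)"

definition hconnected :: "'a set \<Rightarrow> 'a set set \<Rightarrow> bool" where
  "hconnected V H \<longleftrightarrow>
     (\<forall>P Q. P \<subseteq> V \<and> card P = 2 \<and> Q \<subseteq> V \<and> card Q = 2 \<longrightarrow>
        (\<exists>Es. strong_path H Es \<and> P \<subseteq> hd Es \<and> Q \<subseteq> last Es))"

definition triples :: "'a set \<Rightarrow> 'a set set" where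
  "triples V = {E. E \<subseteq> V \<and> card E = 3}"

definition is_colouring :: "'a set \<Rightarrow> nat \<Rightarrow> ('a set \<Rightarrow> nat) \<Rightarrow> bool" where
  "is_colouring V k c \<longleftrightarrow> (\<forall>E\<in>triples V. c E < k)"

definition connected_colouring :: "'a set \<Rightarrow> nat \<Rightarrow> ('a set \<Rightarrow> nat) \<Rightarrow> bool" where
  "connected_colouring V k c \<longleftrightarrow> is_colouring V k c \<and>
     (\<forall>i<k. hconnected V {E\<in>triples V. c E = i})"

definition multicoloured :: "('a set \<Rightarrow> nat) \<Rightarrow> 'a set \<Rightarrow> bool" where
  "multicoloured c S \<longleftrightarrow> card (c ` {E. E \<subseteq> S \<and> card E = 3}) = 4"

end

theory Submission
  imports Defs
begin

text \<open>Take 7k vertices split into k blocks of seven consecutive numbers, and a tournament on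
them in which any two vertices are beaten by a common vertex of every block. Every triple picks
one of its vertices (its source, if it has one) and is coloured by the block of that vertex.
On four vertices the four triples never pick four distinct vertices, whatever the tournament, so
no 4-set is multicoloured. For colour i, a pair {u, v} lies in the triple {u, v, w} of colour i
where w in block i beats u and v; two such steps lead to a pair inside block i, and all triples
inside block i have colour i.\<close>

lemma strong_path_Nil [simp]: "\<not> strong_path H []"
  by (simp add: strong_path_def)

lemma strong_path_singleton [simp]: "strong_path H [E] \<longleftrightarrow> E \<in> H"
  by (simp add: strong_path_def)

lemma strong_path_Cons_Cons:
  "strong_path H (E # F # Es) \<longleftrightarrow> E \<in> H \<and> card (E \<inter> F) = 2 \<and> strong_path H (F # Es)"
  by (auto simp: strong_path_def All_less_Suc2)

lemma strong_path_append:
  assumes "strong_path H xs" "strong_path H ys" "card (last xs \<inter> hd ys) = 2"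
  shows "strong_path H (xs @ ys)"
  using assms
proof (induction xs rule: induct_list012)
  case 1 then show ?case by simp
next
  case (2 E) then show ?case by (cases ys) (auto simp: strong_path_Cons_Cons)
next
  case (3 E F Es) then show ?case by (auto simp: strong_path_Cons_Cons)
qed

lemma strong_path_rev: "strong_path H Es \<Longrightarrow> strong_path H (rev Es)"
proof (induction Es rule: induct_list012)
  case 1 then show ?case by simp
next
  case (2 E) then show ?case by simp
next
  case (3 E F Es)
  then have "strong_path H (rev (F # Es))" "card (last (rev (F # Es)) \<inter> hd [E]) = 2"
    by (simp_all add: strong_path_Cons_Cons Int_commute)
  with "3.prems" have "strong_path H (rev (F # Es) @ [E])"
    by (intro strong_path_append) (simp_all add: strong_path_Cons_Cons)
  then show ?case by simp
qed

definition linked :: "'a set set \<Rightarrow> 'a set \<Rightarrow> 'a set \<Rightarrow> bool" where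
  "linked H P Q \<longleftrightarrow> (\<exists>Es. strong_path H Es \<and> P \<subseteq> hd Es \<and> Q \<subseteq> last Es)"

lemma linked_if_common_edge: "E \<in> H \<Longrightarrow> P \<subseteq> E \<Longrightarrow> Q \<subseteq> E \<Longrightarrow> linked H P Q"
  unfolding linked_def by (intro exI[of _ "[E]"]) simp

lemma linked_sym: "linked H P Q \<Longrightarrow> linked H Q P"
  unfolding linked_def by (metis strong_path_rev hd_rev last_rev)

lemma card_Int_eq_2_if_triples:
  assumes "card A = 3" "card B = 3" "A \<noteq> B" "card R = 2" "R \<subseteq> A \<inter> B"
  shows "card (A \<inter> B) = 2"
proof -
  have fin: "finite A" "finite B" using assms(1,2) card.infinite by fastforce+
  have "A \<inter> B \<noteq> A"
    using assms(1-3) fin card_subset_eq[of B A] by (metis inf.cobounded2)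
  then have "card (A \<inter> B) < 3"
    using assms(1) fin by (metis Int_lower1 psubsetI psubset_card_mono)
  moreover have "card R \<le> card (A \<inter> B)"
    using assms(5) fin by (intro card_mono) auto
  ultimately show ?thesis using assms(4) by linarith
qed

lemma linked_trans:
  assumes uniform: "\<forall>E\<in>H. card E = 3" and R: "card R = 2"
    and "linked H P R" "linked H R Q"
  shows "linked H P Q"
proof -
  obtain Es1 where Es1: "strong_path H Es1" "P \<subseteq> hd Es1" "R \<subseteq> last Es1"
    using assms(3) unfolding linked_def by blast
  obtain Es where Es: "strong_path H Es" "R \<subseteq> hd Es" "Q \<subseteq> last Es"
    using assms(4) unfolding linked_def by blast
  then obtain E Es2 where Es2: "Es = E # Es2" by (cases Es) auto
  have ne: "Es1 \<noteq> []" using Es1(1) by auto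
  have in_H: "last Es1 \<in> H" "E \<in> H"
    using Es1(1) Es(1) Es2 ne by (auto simp: strong_path_def)
  show ?thesis
  proof (cases "last Es1 = E")
    case True
    show ?thesis
    proof (cases Es2)
      case Nil
      then show ?thesis unfolding linked_def using Es1 Es Es2 True by (intro exI[of _ Es1]) simp
    next
      case (Cons F Es2')
      with Es(1) Es2 have "card (E \<inter> F) = 2" "strong_path H Es2"
        by (simp_all add: strong_path_Cons_Cons)
      with Es1(1) True Cons have "strong_path H (Es1 @ Es2)"
        by (intro strong_path_append) simp_all
      then show ?thesis
        unfolding linked_def using Es1(2) Es(3) Es2 Cons ne by (intro exI[of _ "Es1 @ Es2"]) simp
    qed
  next
    case False
    then have "card (last Es1 \<inter> E) = 2"
      using uniform in_H R Es1(3) Es(2) Es2 by (intro card_Int_eq_2_if_triples) auto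
    with Es1(1) Es(1) Es2 have "strong_path H (Es1 @ Es)"
      by (intro strong_path_append) simp_all
    then show ?thesis
      unfolding linked_def using Es1(2) Es(3) Es2 ne by (intro exI[of _ "Es1 @ Es"]) simp
  qed
qed

lemma hconnected_if_linked_to:
  assumes uniform: "\<forall>E\<in>H. card E = 3" and R: "card R = 2"
    and linked_R: "\<And>P. P \<subseteq> V \<Longrightarrow> card P = 2 \<Longrightarrow> linked H P R"
  shows "hconnected V H"
  unfolding hconnected_def linked_def[symmetric]
proof (intro allI impI)
  fix P Q assume "P \<subseteq> V \<and> card P = 2 \<and> Q \<subseteq> V \<and> card Q = 2"
  then have "linked H P R" "linked H R Q" using linked_R linked_sym by blast+
  then show "linked H P Q" using linked_trans[OF uniform R] by blast
qed

definition tournament_pick :: "('a \<Rightarrow> 'a \<Rightarrow> bool) \<Rightarrow> 'a \<Rightarrow> 'a \<Rightarrow> 'a \<Rightarrow> 'a" where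
  "tournament_pick T a b c =
     (if T a b \<and> T a c then a else if T b a \<and> T b c then b else if T c a \<and> T c b then c
      else if T b a then b else c)"

lemma tournament_pick_mem: "tournament_pick T a b c \<in> {a, b, c}"
  by (simp add: tournament_pick_def)

lemma tournament_pick_source:
  assumes tournament: "\<And>u v. u \<noteq> v \<Longrightarrow> T v u \<longleftrightarrow> \<not> T u v"
    and "distinct [a, b, c]" "s \<in> {a, b, c}" "\<forall>x\<in>{a, b, c} - {s}. T s x"
  shows "tournament_pick T a b c = s"
  using assms(2-4) tournament[of a b] tournament[of a c] tournament[of b c]
  by (auto simp: tournament_pick_def)

lemma tournament_pick_not_distinct:
  assumes tournament: "\<And>u v. u \<noteq> v \<Longrightarrow> T v u \<longleftrightarrow> \<not> T u v"
    and "distinct [a, b, c, d]"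
  shows "\<not> distinct [tournament_pick T a b c, tournament_pick T a b d,
                      tournament_pick T a c d, tournament_pick T b c d]"
  using assms(2) tournament[of a b] tournament[of a c] tournament[of a d]
    tournament[of b c] tournament[of b d] tournament[of c d]
  by (cases "T a b"; cases "T a c"; cases "T a d"; cases "T b c"; cases "T b d"; cases "T c d")
    (simp_all add: tournament_pick_def)

definition paley7 :: "nat \<Rightarrow> nat \<Rightarrow> bool" where
  "paley7 x y \<longleftrightarrow> (y + 7 - x) mod 7 \<in> {1, 2, 4}"

lemma paley7_irrefl: "\<not> paley7 x x"
  by (simp add: paley7_def)

lemma paley7_asym:
  assumes "x < 7" "y < 7" "x \<noteq> y"
  shows "paley7 y x \<longleftrightarrow> \<not> paley7 x y"
proof -
  have "\<forall>x\<in>{..<7}. \<forall>y\<in>{..<7}. x \<noteq> y \<longrightarrow> (paley7 y x \<longleftrightarrow> \<not> paley7 x y)"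
    by (simp add: paley7_def lessThan_nat_numeral)
  then show ?thesis using assms by blast
qed

lemma paley7_dominated:
  assumes "x < 7" "y < 7"
  shows "\<exists>z<7. paley7 z x \<and> paley7 z y"
proof -
  have "\<forall>x\<in>{..<7}. \<forall>y\<in>{..<7}. \<exists>z\<in>{..<7}. paley7 z x \<and> paley7 z y"
    by (simp add: paley7_def lessThan_nat_numeral)
  then obtain z where "z \<in> {..<7}" "paley7 z x" "paley7 z y" using assms by blast
  then show ?thesis by blast
qed

text \<open>The Paley tournament on Z/7 (x beats y iff y - x is a nonzero square), blown up so that
each residue class is ordered transitively by <.\<close>

definition beats :: "nat \<Rightarrow> nat \<Rightarrow> bool" where
  "beats u v \<longleftrightarrow> u \<noteq> v \<and> (u mod 7 = v mod 7 \<and> u < v \<or> paley7 (u mod 7) (v mod 7))"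

lemma beats_asym: "u \<noteq> v \<Longrightarrow> beats v u \<longleftrightarrow> \<not> beats u v"
  using paley7_asym[of "u mod 7" "v mod 7"] paley7_irrefl[of "u mod 7"]
  by (cases "u mod 7 = v mod 7") (auto simp: beats_def)

lemma beats_dominated_from_block: "\<exists>w. w div 7 = i \<and> beats w u \<and> beats w v"
proof -
  obtain z where z: "z < 7" "paley7 z (u mod 7)" "paley7 z (v mod 7)"
    using paley7_dominated[of "u mod 7" "v mod 7"] by auto
  define w where "w = 7 * i + z"
  have w: "w mod 7 = z" "w div 7 = i" using z(1) by (simp_all add: w_def)
  then have "w \<noteq> u" "w \<noteq> v" using z paley7_irrefl by metis+
  then show ?thesis using w z by (auto simp: beats_def)
qed

lemma card_3_sorted:
  fixes E :: "'a::linorder set"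
  assumes "card E = 3"
  obtains a b c where "a < b" "b < c" "E = {a, b, c}"
proof -
  define xs where "xs = sorted_list_of_set E"
  have "finite E" using assms card.infinite by fastforce
  then have xs: "sorted_wrt (<) xs" "set xs = E" "length xs = 3" using assms by (simp_all add: xs_def)
  then obtain a b c where "xs = [a, b, c]"
    by (auto simp: numeral_eq_Suc length_Suc_conv)
  with xs that show thesis by auto
qed

lemma card_4_sorted:
  fixes E :: "'a::linorder set"
  assumes "card E = 4"
  obtains a b c d where "a < b" "b < c" "c < d" "E = {a, b, c, d}"
proof -
  define xs where "xs = sorted_list_of_set E"
  have "finite E" using assms card.infinite by fastforce
  then have xs: "sorted_wrt (<) xs" "set xs = E" "length xs = 4" using assms by (simp_all add: xs_def)
  then obtain a b c d where "xs = [a, b, c, d]"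
    by (auto simp: numeral_eq_Suc length_Suc_conv)
  with xs that show thesis by auto
qed

lemma triples_of_4_set:
  assumes "distinct [a, b, c, d]"
  shows "{E. E \<subseteq> {a, b, c, d} \<and> card E = 3} = {{a, b, c}, {a, b, d}, {a, c, d}, {b, c, d}}"
proof (intro equalityI subsetI)
  fix E assume "E \<in> {E. E \<subseteq> {a, b, c, d} \<and> card E = 3}"
  then have E: "E \<subseteq> {a, b, c, d}" "card E = 3" by auto
  have "card ({a, b, c, d} - E) = 1"
    using E assms card_Diff_subset[of E "{a, b, c, d}"] finite_subset[OF E(1)] by simp
  then obtain x where "{a, b, c, d} - E = {x}" by (meson card_1_singletonE)
  then have "E = {a, b, c, d} - {x}" "x \<in> {a, b, c, d}" using E(1) by auto
  then show "E \<in> {{a, b, c}, {a, b, d}, {a, c, d}, {b, c, d}}" using assms by auto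
qed (use assms in auto)

definition pick :: "nat set \<Rightarrow> nat" where
  "pick E = (let l = sorted_list_of_set E in tournament_pick beats (l ! 0) (l ! 1) (l ! 2))"

definition colour :: "nat set \<Rightarrow> nat" where
  "colour E = pick E div 7"

lemma pick_sorted: "a < b \<Longrightarrow> b < c \<Longrightarrow> pick {a, b, c} = tournament_pick beats a b c"
proof -
  assume "a < b" "b < c"
  then have "sorted_list_of_set {a, b, c} = [a, b, c]"
    by (subst sorted_list_of_set_unique[symmetric]) auto
  then show ?thesis by (simp add: pick_def)
qed

lemma pick_mem: "card E = 3 \<Longrightarrow> pick E \<in> E"
  by (metis card_3_sorted pick_sorted tournament_pick_mem)

lemma pick_source:
  assumes "card E = 3" "s \<in> E" "\<forall>x\<in>E - {s}. beats s x"
  shows "pick E = s"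
proof -
  obtain a b c where abc: "a < b" "b < c" "E = {a, b, c}" using card_3_sorted[OF assms(1)] .
  have "tournament_pick beats a b c = s"
    by (rule tournament_pick_source[of beats, OF beats_asym]) (use assms abc in auto)
  then show ?thesis using abc by (simp add: pick_sorted)
qed

lemma colour_not_multicoloured:
  assumes "card S = 4"
  shows "\<not> multicoloured colour S"
proof
  obtain a b c d where abcd: "a < b" "b < c" "c < d" "S = {a, b, c, d}"
    using card_4_sorted[OF assms] .
  then have distinct: "distinct [a, b, c, d]" by auto
  let ?picks = "[tournament_pick beats a b c, tournament_pick beats a b d,
                 tournament_pick beats a c d, tournament_pick beats b c d]"
  have "colour ` {E. E \<subseteq> S \<and> card E = 3} = set (map (\<lambda>v. v div 7) ?picks)"
    unfolding abcd(4) triples_of_4_set[OF distinct] using abcd(1-3)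
    by (simp add: colour_def pick_sorted)
  moreover assume "multicoloured colour S"
  ultimately have "card (set (map (\<lambda>v. v div 7) ?picks)) = length (map (\<lambda>v. v div 7) ?picks)"
    by (simp add: multicoloured_def)
  then have "distinct ?picks" using card_distinct distinct_map by blast
  then show False using tournament_pick_not_distinct[of beats, OF beats_asym distinct] by blast
qed

definition colour_class :: "nat \<Rightarrow> nat \<Rightarrow> nat set set" where
  "colour_class k i = {E \<in> triples {..<7 * k}. colour E = i}"

lemma block_triple_in_colour_class:
  assumes "i < k" "E \<subseteq> {7 * i..<7 * i + 7}" "card E = 3"
  shows "E \<in> colour_class k i"
proof -
  have "7 * i \<le> pick E" "pick E < 7 * i + 7" using assms(2,3) pick_mem by fastforce+
  then have "colour E = i" unfolding colour_def by (intro div_nat_eqI) simp_all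
  moreover have "E \<subseteq> {..<7 * k}" using assms(1,2) by auto
  ultimately show ?thesis using assms(3) by (simp add: colour_class_def triples_def)
qed

lemma dominated_triple_in_colour_class:
  assumes "i < k" "u < 7 * k" "v < 7 * k" "u \<noteq> v" "w div 7 = i" "beats w u" "beats w v"
  shows "{u, v, w} \<in> colour_class k i"
proof -
  have "w \<noteq> u" "w \<noteq> v" using assms(6,7) by (auto simp: beats_def)
  then have card: "card {u, v, w} = 3" using assms(4) by simp
  then have "pick {u, v, w} = w" using assms(6,7) by (intro pick_source) auto
  then have "colour {u, v, w} = i" using assms(5) by (simp add: colour_def)
  moreover have "w < 7 * k" using assms(1,5) by linarith
  ultimately show ?thesis using assms(2,3) card by (simp add: colour_class_def triples_def)
qed

lemma colour_class_uniform: "\<forall>E\<in>colour_class k i. card E = 3"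
  by (simp add: colour_class_def triples_def)

lemma linked_within_block:
  assumes "i < k" "a div 7 = i" "b div 7 = i" "a \<noteq> b"
  shows "linked (colour_class k i) {a, b} {7 * i, 7 * i + 1}"
proof -
  have block_triple: "\<exists>E\<in>colour_class k i. X \<subseteq> E"
    if X: "X \<subseteq> {7 * i..<7 * i + 7}" "card X \<le> 3" for X
  proof -
    obtain E where "X \<subseteq> E" "E \<subseteq> {7 * i..<7 * i + 7}" "card E = 3"
      using exists_subset_between[of X 3 "{7 * i..<7 * i + 7}"] X by auto
    then show ?thesis using block_triple_in_colour_class[OF assms(1)] by blast
  qed
  have block: "a \<in> {7 * i..<7 * i + 7}" "b \<in> {7 * i..<7 * i + 7}" using assms(2,3) by auto
  have small: "card {x, y, z} \<le> 3" for x y z :: nat by (simp add: card_insert_if)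
  show ?thesis
  proof (cases "b = 7 * i")
    case True
    obtain E where "E \<in> colour_class k i" "{a, b, 7 * i + 1} \<subseteq> E"
      using block_triple[of "{a, b, 7 * i + 1}"] block small by auto
    then show ?thesis using True by (intro linked_if_common_edge) auto
  next
    case False
    obtain E where "E \<in> colour_class k i" "{a, b, 7 * i} \<subseteq> E"
      using block_triple[of "{a, b, 7 * i}"] block small by auto
    then have "linked (colour_class k i) {a, b} {b, 7 * i}"
      by (intro linked_if_common_edge) auto
    moreover obtain E' where "E' \<in> colour_class k i" "{b, 7 * i, 7 * i + 1} \<subseteq> E'"
      using block_triple[of "{b, 7 * i, 7 * i + 1}"] block small by auto
    then have "linked (colour_class k i) {b, 7 * i} {7 * i, 7 * i + 1}"
      by (intro linked_if_common_edge) auto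
    ultimately show ?thesis
      using False linked_trans[OF colour_class_uniform, of "{b, 7 * i}"] by simp
  qed
qed

lemma linked_to_block:
  assumes "i < k" "u < 7 * k" "v < 7 * k" "u \<noteq> v"
  shows "linked (colour_class k i) {u, v} {7 * i, 7 * i + 1}"
proof -
  obtain w where w: "w div 7 = i" "beats w u" "beats w v"
    using beats_dominated_from_block by blast
  obtain w' where w': "w' div 7 = i" "beats w' u" "beats w' w"
    using beats_dominated_from_block by blast
  have ne: "w \<noteq> u" "w' \<noteq> w" using w w' by (auto simp: beats_def)
  have "w < 7 * k" using assms(1) w(1) by linarith
  have uv_uw: "linked (colour_class k i) {u, v} {u, w}"
    using dominated_triple_in_colour_class[OF assms w] by (intro linked_if_common_edge) auto
  have uw_ww': "linked (colour_class k i) {u, w} {w, w'}"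
    using dominated_triple_in_colour_class[OF assms(1,2) \<open>w < 7 * k\<close> ne(1)[symmetric] w']
    by (intro linked_if_common_edge) auto
  have ww'_base: "linked (colour_class k i) {w, w'} {7 * i, 7 * i + 1}"
    using linked_within_block[OF assms(1) w(1) w'(1) ne(2)[symmetric]] .
  have "card {u, w} = 2" "card {w, w'} = 2" using ne by auto
  with uv_uw uw_ww' ww'_base show ?thesis
    using linked_trans[OF colour_class_uniform] by metis
qed

lemma colour_class_hconnected:
  assumes "i < k"
  shows "hconnected {..<7 * k} (colour_class k i)"
proof (rule hconnected_if_linked_to[OF colour_class_uniform])
  show "card {7 * i, 7 * i + 1} = 2" by simp
  fix P assume "P \<subseteq> {..<7 * k}" "card P = 2"
  then obtain u v where "P = {u, v}" "u \<noteq> v" "u < 7 * k" "v < 7 * k"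
    by (auto simp: card_2_iff)
  then show "linked (colour_class k i) P {7 * i, 7 * i + 1}"
    using linked_to_block[OF assms] by blast
qed

lemma connected_colouring_colour: "connected_colouring {..<7 * k} k colour"
  unfolding connected_colouring_def is_colouring_def
proof (intro conjI ballI allI impI)
  fix E assume "E \<in> triples {..<7 * k}"
  then have "pick E < 7 * k" using pick_mem by (auto simp: triples_def)
  then show "colour E < k" by (simp add: colour_def less_mult_imp_div_less)
next
  show "i < k \<Longrightarrow> hconnected {..<7 * k} {E \<in> triples {..<7 * k}. colour E = i}" for i
    using colour_class_hconnected by (simp add: colour_class_def)
qed

theorem theorem9:
  fixes k :: nat
  assumes "k \<ge> 1"
  shows "\<exists>(n::nat) (c :: nat set \<Rightarrow> nat). n \<ge> 3 \<and> connected_colouring {..<n} k c \<and>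
           (\<forall>S. S \<subseteq> {..<n} \<and> card S = 4 \<longrightarrow> \<not> multicoloured c S)"
proof (intro exI[of _ "7 * k"] exI[of _ colour] conjI allI impI)
  show "3 \<le> 7 * k" using assms by simp
  show "connected_colouring {..<7 * k} k colour" by (rule connected_colouring_colour)
  show "\<not> multicoloured colour S" if "S \<subseteq> {..<7 * k} \<and> card S = 4" for S
    using that colour_not_multicoloured by blast
qed

end
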